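(* Let $\mu$ be a joint distribution of $(X,A,Y)$ with $X\in\mathcal X$, $A\in\mathcal A$ ($\mathcal A$ finite), $Y\in\mathbb R$, $\mathbb E[Y^2]<\infty$. Let $w_a=\Pr(A=a)$, let $f^*(x,a)=\mathbb E[Y\mid X=x,A=a]$ be the Bayes regressor, and let $r^*_a$ be the distribution of $f^*(X,A)$ conditioned on $A=a$. Then for every $\alpha\ge 0$, \[ \inf_{f:\ \Delta_{\mathrm{SP}}(f)\le\alpha}\ \mathit{ER}(f)\;=\;\inf_{\substack{q:\ \mathrm{supp}(q)\subseteq\mathbb R\\ \{q_a\}_{a\in\mathcal A}\subset B_{\mathrm{KS}}(q,\alpha/2)}}\ \sum_{a\in\mathcal A} w_a\, W_2^2(r^*_a,q_a), \] where the infimum on the left ranges over all (possibly randomized) attribute-aware regressors $f:\mathcal X\times\mathcal A\to\mathbb R$ (the paper states both sides as minima).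
   Context: A randomized regressor $f:\mathcal X\times\mathcal A\to\mathbb R$ is given by a Markov kernel $\mathcal K((x,a),\cdot)$: $\Pr(f(x,a)\in T)=\mathcal K((x,a),T)$, with the randomness of $f$ independent of $(X,A,Y)$. Excess risk: $\mathit{ER}(f)=\mathbb E[(f(X,A)-Y)^2]-\mathbb E[(f^*(X,A)-Y)^2]=\mathbb E[(f(X,A)-f^*(X,A))^2]$. Kolmogorov–Smirnov distance between probability measures $p,q$ on $\mathbb R$: $D_{\mathrm{KS}}(p,q)=\sup_{t\in\mathbb R}|p((-\infty,t])-q((-\infty,t])|$. Statistical parity gap: $\Delta_{\mathrm{SP}}(f)=\max_{a,a'\in\mathcal A}D_{\mathrm{KS}}(r_a,r_{a'})$, where $r_a$ is the distribution of $f(X,A)$ conditioned on $A=a$. $B_{\mathrm{KS}}(q,\rho)=\{p \text{ probability measure on }\mathbb R: D_{\mathrm{KS}}(p,q)\le\rho\}$. $W_2^2(p,q)=\inf_{\pi\in\Pi(p,q)}\int(y-y')^2\,d\pi(y,y')$, where $\Pi(p,q)$ is the set of couplings of $p$ and $q$. *)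

theory Defs
  imports "HOL-Probability.Probability"
begin

text \<open>Observations are triples (x, a, y) :: 'x \<times> 'a \<times> real; the joint law mu lives on
  MX \<otimes> count_space UNIV \<otimes> borel.  A randomized regressor is a Markov kernel
  K :: 'x \<times> 'a \<Rightarrow> real measure, i.e. K \<in> (MX \<otimes> count_space UNIV) \<rightarrow> prob_algebra borel.\<close>

definition grp_event :: "'a \<Rightarrow> ('x \<times> 'a \<times> real) set" where
  "grp_event a = {\<omega>. fst (snd \<omega>) = a}"

definition grp_weight :: "('x \<times> 'a \<times> real) measure \<Rightarrow> 'a \<Rightarrow> real" where
  "grp_weight mu a = measure mu (grp_event a)"

definition is_bayes_regressor ::
  "'x measure \<Rightarrow> ('x \<times> 'a \<times> real) measure \<Rightarrow> ('x \<times> 'a \<Rightarrow> real) \<Rightarrow> bool" where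
  "is_bayes_regressor MX mu fstar \<longleftrightarrow>
     fstar \<in> borel_measurable (MX \<Otimes>\<^sub>M count_space UNIV) \<and>
     integrable mu (\<lambda>\<omega>. fstar (fst \<omega>, fst (snd \<omega>))) \<and>
     (\<forall>S \<in> sets (MX \<Otimes>\<^sub>M count_space UNIV).
        (\<integral>\<omega>. indicator S (fst \<omega>, fst (snd \<omega>)) * snd (snd \<omega>) \<partial>mu)
      = (\<integral>\<omega>. indicator S (fst \<omega>, fst (snd \<omega>)) * fstar (fst \<omega>, fst (snd \<omega>)) \<partial>mu))"

definition cond_out_dist ::
  "('x \<times> 'a \<times> real) measure \<Rightarrow> ('x \<times> 'a \<Rightarrow> real measure) \<Rightarrow> 'a \<Rightarrow> real measure" where
  "cond_out_dist mu K a = bind (uniform_measure mu (grp_event a)) (\<lambda>\<omega>. K (fst \<omega>, fst (snd \<omega>)))"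

definition cond_bayes_dist ::
  "('x \<times> 'a \<times> real) measure \<Rightarrow> ('x \<times> 'a \<Rightarrow> real) \<Rightarrow> 'a \<Rightarrow> real measure" where
  "cond_bayes_dist mu fstar a =
     distr (uniform_measure mu (grp_event a)) borel (\<lambda>\<omega>. fstar (fst \<omega>, fst (snd \<omega>)))"

definition excess_risk ::
  "('x \<times> 'a \<times> real) measure \<Rightarrow> ('x \<times> 'a \<Rightarrow> real) \<Rightarrow> ('x \<times> 'a \<Rightarrow> real measure) \<Rightarrow> ennreal" where
  "excess_risk mu fstar K =
     (\<integral>\<^sup>+\<omega>. (\<integral>\<^sup>+t. ennreal ((t - fstar (fst \<omega>, fst (snd \<omega>)))\<^sup>2) \<partial>K (fst \<omega>, fst (snd \<omega>))) \<partial>mu)"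

definition D_KS :: "real measure \<Rightarrow> real measure \<Rightarrow> real" where
  "D_KS p q = (SUP t. \<bar>measure p {..t} - measure q {..t}\<bar>)"

definition sp_gap ::
  "('x \<times> 'a::finite \<times> real) measure \<Rightarrow> ('x \<times> 'a \<Rightarrow> real measure) \<Rightarrow> real" where
  "sp_gap mu K = Max ((\<lambda>(a, a'). D_KS (cond_out_dist mu K a) (cond_out_dist mu K a')) ` UNIV)"

definition prob_measures_R :: "real measure set" where
  "prob_measures_R = {p. prob_space p \<and> sets p = sets borel}"

definition couplings :: "real measure \<Rightarrow> real measure \<Rightarrow> (real \<times> real) measure set" where
  "couplings p q = {\<pi>. prob_space \<pi> \<and> sets \<pi> = sets (borel \<Otimes>\<^sub>M borel) \<and>
                       distr \<pi> borel fst = p \<and> distr \<pi> borel snd = q}"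

definition W2sq :: "real measure \<Rightarrow> real measure \<Rightarrow> ennreal" where
  "W2sq p q = (INF \<pi> \<in> couplings p q. \<integral>\<^sup>+z. ennreal ((fst z - snd z)\<^sup>2) \<partial>\<pi>)"

end

theory Submission
  imports Defs
begin

text \<open>
  Lower bound: for any randomized regressor K, drawing (f*(X,A), K(X,A)) given
  A = a couples r*_a with the output law r_a, so the excess risk dominates
  \<Sum>a w_a W_2^2(r*_a, r_a); and since the r_a are pairwise within \<alpha> in
  Kolmogorov-Smirnov distance, the law whose CDF is the pointwise mid-range of
  their CDFs is within \<alpha>/2 of each of them.

  Upper bound: given q and laws Q_a in the \<alpha>/2-ball around q, take near-optimal
  couplings of r*_a and Q_a and let the regressor sample from their conditional
  law of the second coordinate given the first.  Disintegration is replaced by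
  conditioning on a grid cell of width e around f*(x,a): this reproduces Q_a
  exactly and inflates the transport cost only to (1 + e) cost + e + e^2, which
  tends to the cost as e \<rightarrow> 0.  The outputs then lie pairwise within \<alpha> of each
  other, so the regressor is feasible.\<close>

section \<open>Kolmogorov-Smirnov distance\<close>

lemma prob_measures_R_iff_real_distribution: "p \<in> prob_measures_R \<longleftrightarrow> real_distribution p"
  unfolding prob_measures_R_def real_distribution_def real_distribution_axioms_def by auto

lemma D_KS_leI:
  assumes "\<And>t. \<bar>measure p {..t} - measure q {..t}\<bar> \<le> c"
  shows "D_KS p q \<le> c"
  unfolding D_KS_def by (rule cSUP_least) (auto simp: assms)

lemma abs_cdf_diff_le_D_KS:
  assumes "prob_space p" "prob_space q"
  shows "\<bar>measure p {..t} - measure q {..t}\<bar> \<le> D_KS p q"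
proof -
  have "\<bar>measure p {..s} - measure q {..s}\<bar> \<le> 1" for s
    using prob_space.prob_le_1[OF assms(1)] prob_space.prob_le_1[OF assms(2)]
    by (smt (verit) measure_nonneg)
  then have "bdd_above (range (\<lambda>s. \<bar>measure p {..s} - measure q {..s}\<bar>))"
    by (intro bdd_aboveI2)
  then show ?thesis
    unfolding D_KS_def by (rule cSUP_upper[OF UNIV_I])
qed

lemma D_KS_commute: "D_KS p q = D_KS q p"
  unfolding D_KS_def by (simp add: abs_minus_commute)

lemma D_KS_triangle:
  assumes "prob_space p" "prob_space q" "prob_space r"
  shows "D_KS p r \<le> D_KS p q + D_KS q r"
proof (rule D_KS_leI)
  fix t
  have "\<bar>measure p {..t} - measure r {..t}\<bar>
      \<le> \<bar>measure p {..t} - measure q {..t}\<bar> + \<bar>measure q {..t} - measure r {..t}\<bar>"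
    by linarith
  also have "\<dots> \<le> D_KS p q + D_KS q r"
    using abs_cdf_diff_le_D_KS[OF assms(1,2)] abs_cdf_diff_le_D_KS[OF assms(2,3)] by (rule add_mono)
  finally show "\<bar>measure p {..t} - measure r {..t}\<bar> \<le> D_KS p q + D_KS q r" .
qed

lemma sp_gap_le_iff:
  fixes mu :: "('x \<times> 'a::finite \<times> real) measure"
  shows "sp_gap mu K \<le> c \<longleftrightarrow> (\<forall>a b. D_KS (cond_out_dist mu K a) (cond_out_dist mu K b) \<le> c)"
  unfolding sp_gap_def by (subst Max_le_iff) auto

lemma sp_gap_le_if_in_KS_ball:
  fixes mu :: "('x \<times> 'a::finite \<times> real) measure"
  assumes "q \<in> prob_measures_R" and "\<And>a. cond_out_dist mu K a \<in> prob_measures_R"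
    and "\<And>a. D_KS (cond_out_dist mu K a) q \<le> alpha / 2"
  shows "sp_gap mu K \<le> alpha"
proof -
  have "D_KS (cond_out_dist mu K a) (cond_out_dist mu K b) \<le> alpha" for a b
    using D_KS_triangle[of "cond_out_dist mu K a" q "cond_out_dist mu K b"] assms(1,2) assms(3)[of a] assms(3)[of b]
    by (simp add: prob_measures_R_def D_KS_commute[of q])
  then show ?thesis
    by (simp add: sp_gap_le_iff)
qed

lemma tendsto_Max_finite:
  fixes f :: "'i \<Rightarrow> 'b \<Rightarrow> real"
  assumes "finite S" "S \<noteq> {}" "\<And>i. i \<in> S \<Longrightarrow> (f i \<longlongrightarrow> l i) F"
  shows "((\<lambda>x. Max ((\<lambda>i. f i x) ` S)) \<longlongrightarrow> Max (l ` S)) F"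
  using assms
proof (induction S rule: finite_ne_induct)
  case (insert i S)
  then have "((\<lambda>x. max (f i x) (Max ((\<lambda>i. f i x) ` S))) \<longlongrightarrow> max (l i) (Max (l ` S))) F"
    by (intro tendsto_max) auto
  with insert show ?case by simp
qed simp

lemma tendsto_Min_finite:
  fixes f :: "'i \<Rightarrow> 'b \<Rightarrow> real"
  assumes "finite S" "S \<noteq> {}" "\<And>i. i \<in> S \<Longrightarrow> (f i \<longlongrightarrow> l i) F"
  shows "((\<lambda>x. Min ((\<lambda>i. f i x) ` S)) \<longlongrightarrow> Min (l ` S)) F"
  using assms
proof (induction S rule: finite_ne_induct)
  case (insert i S)
  then have "((\<lambda>x. min (f i x) (Min ((\<lambda>i. f i x) ` S))) \<longlongrightarrow> min (l i) (Min (l ` S))) F"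
    by (intro tendsto_min) auto
  with insert show ?case by simp
qed simp

definition mid_range :: "('i::finite \<Rightarrow> real) \<Rightarrow> real" where
  "mid_range v = (Max (range v) + Min (range v)) / 2"

lemma mid_range_const [simp]: "mid_range (\<lambda>_. c) = c"
  by (simp add: mid_range_def image_constant_conv)

lemma mid_range_mono:
  assumes "\<And>i. v i \<le> w i"
  shows "mid_range v \<le> mid_range w"
proof -
  have "w i \<le> Max (range w)" "Min (range v) \<le> v i" for i
    by simp_all
  then have "v i \<le> Max (range w)" "Min (range v) \<le> w i" for i
    using assms[of i] by (meson order_trans)+
  then have "Max (range v) \<le> Max (range w)" "Min (range v) \<le> Min (range w)"
    by (simp_all add: Max_le_iff Min_ge_iff)
  then show ?thesis
    unfolding mid_range_def by (intro divide_right_mono add_mono) auto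
qed

lemma tendsto_mid_range:
  assumes "\<And>i. (f i \<longlongrightarrow> l i) F"
  shows "((\<lambda>x. mid_range (\<lambda>i. f i x)) \<longlongrightarrow> mid_range l) F"
  unfolding mid_range_def
  by (intro tendsto_intros tendsto_Max_finite tendsto_Min_finite assms) auto

lemma abs_diff_mid_range_le:
  assumes "\<And>i j. \<bar>v i - v j\<bar> \<le> c"
  shows "\<bar>v i - mid_range v\<bar> \<le> c / 2"
proof -
  have "Max (range v) \<in> range v" "Min (range v) \<in> range v"
    by (auto intro: Max_in Min_in)
  then obtain j k where j: "v j = Max (range v)" and k: "v k = Min (range v)"
    by (metis rangeE)
  have "v k \<le> v i" "v i \<le> v j" "v j - v k \<le> c"
    using j k assms[of j k] by auto
  then show ?thesis
    unfolding mid_range_def j[symmetric] k[symmetric] abs_le_iff by (auto simp: field_simps)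
qed

text \<open>The centre is the law whose CDF is the pointwise mid-range of the given CDFs.\<close>

lemma KS_center_exists:
  fixes Q :: "'i::finite \<Rightarrow> real measure"
  assumes Q: "\<And>i. Q i \<in> prob_measures_R"
    and gap: "\<And>i j. D_KS (Q i) (Q j) \<le> alpha"
  shows "\<exists>q\<in>prob_measures_R. \<forall>i. D_KS (Q i) q \<le> alpha / 2"
proof -
  interpret Q: real_distribution "Q i" for i
    using Q by (simp add: prob_measures_R_iff_real_distribution)
  define G where "G t = mid_range (\<lambda>i. cdf (Q i) t)" for t
  have mono: "G s \<le> G t" if "s \<le> t" for s t
    unfolding G_def using that by (intro mid_range_mono Q.cdf_nondecreasing)
  have right_cont: "continuous (at_right t) G" for t
    unfolding G_def continuous_within
    using Q.cdf_is_right_cont[of t] by (intro tendsto_mid_range) (simp add: continuous_within)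
  have "(G \<longlongrightarrow> mid_range (\<lambda>_::'i. 0)) at_bot"
    unfolding G_def by (rule tendsto_mid_range) (rule Q.cdf_lim_at_bot)
  then have at_bot: "(G \<longlongrightarrow> 0) at_bot"
    by simp
  have "(G \<longlongrightarrow> mid_range (\<lambda>_::'i. 1)) at_top"
    unfolding G_def by (rule tendsto_mid_range) (rule Q.cdf_lim_at_top_prob)
  then have at_top: "(G \<longlongrightarrow> 1) at_top"
    by simp
  define q where "q = interval_measure G"
  have "q \<in> prob_measures_R"
    unfolding q_def prob_measures_R_iff_real_distribution
    using real_distribution_interval_measure[OF mono right_cont at_bot at_top] .
  moreover have "D_KS (Q i) q \<le> alpha / 2" for i
  proof (rule D_KS_leI)
    fix t
    have "\<bar>cdf (Q i) t - cdf (Q j) t\<bar> \<le> alpha" for i j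
      using abs_cdf_diff_le_D_KS[of "Q i" "Q j" t] gap[of i j] by (simp add: cdf_def Q.prob_space_axioms)
    then have "\<bar>cdf (Q i) t - G t\<bar> \<le> alpha / 2"
      unfolding G_def by (rule abs_diff_mid_range_le)
    then show "\<bar>measure (Q i) {..t} - measure q {..t}\<bar> \<le> alpha / 2"
      using measure_interval_measure_Iic[OF mono right_cont at_bot, of t] by (simp add: q_def cdf_def)
  qed
  ultimately show ?thesis by blast
qed

section \<open>Couplings and kernels\<close>

text \<open>The law of (g, t), with t drawn from the kernel at the same point, couples the two laws.\<close>

lemma W2sq_distr_bind_le:
  assumes M: "prob_space M" and g [measurable]: "g \<in> borel_measurable M"
    and kernel [measurable]: "\<kappa> \<in> M \<rightarrow>\<^sub>M prob_algebra borel"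
  shows "W2sq (distr M borel g) (M \<bind> \<kappa>) \<le> (\<integral>\<^sup>+\<omega>. \<integral>\<^sup>+t. ennreal ((t - g \<omega>)\<^sup>2) \<partial>\<kappa> \<omega> \<partial>M)"
proof -
  define N where "N \<omega> = distr (\<kappa> \<omega>) (borel \<Otimes>\<^sub>M borel) (\<lambda>t. (g \<omega>, t))" for \<omega>
  have N [measurable]: "N \<in> M \<rightarrow>\<^sub>M prob_algebra (borel \<Otimes>\<^sub>M borel)"
    unfolding N_def by measurable
  have N_subprob [measurable]: "N \<in> M \<rightarrow>\<^sub>M subprob_algebra (borel \<Otimes>\<^sub>M borel)"
    using N by (rule measurable_prob_algebraD)
  have M_prob: "M \<in> space (prob_algebra M)"
    using M by (simp add: space_prob_algebra)
  have M_ne: "space M \<noteq> {}"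
    using M by (rule prob_space.not_empty)
  have kernel_space: "sets (\<kappa> \<omega>) = sets borel" "prob_space (\<kappa> \<omega>)" if "\<omega> \<in> space M" for \<omega>
    using measurable_space[OF kernel that] by (simp_all add: space_prob_algebra)
  have pair_measurable: "(\<lambda>t. (g \<omega>, t)) \<in> \<kappa> \<omega> \<rightarrow>\<^sub>M borel \<Otimes>\<^sub>M borel" if "\<omega> \<in> space M" for \<omega>
    using kernel_space[OF that] by (simp add: measurable_cong_sets[of "\<kappa> \<omega>" borel])
  define \<pi> where "\<pi> = M \<bind> N"
  have "distr \<pi> borel fst = M \<bind> (\<lambda>\<omega>. return borel (g \<omega>))"
    unfolding \<pi>_def
  proof (subst distr_bind[OF N_subprob M_ne], simp, rule bind_cong[OF refl])
    fix \<omega> assume "\<omega> \<in> space M"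
    then show "distr (N \<omega>) borel fst = return borel (g \<omega>)"
      unfolding N_def using kernel_space pair_measurable
      by (simp add: distr_distr comp_def prob_space.distr_const)
  qed
  also have "\<dots> = distr M borel g"
    using M_ne by (rule bind_return_distr') simp
  finally have fst_marginal: "distr \<pi> borel fst = distr M borel g" .
  have "distr \<pi> borel snd = M \<bind> \<kappa>"
    unfolding \<pi>_def
  proof (subst distr_bind[OF N_subprob M_ne], simp, rule bind_cong[OF refl])
    fix \<omega> assume "\<omega> \<in> space M"
    then show "distr (N \<omega>) borel snd = \<kappa> \<omega>"
      unfolding N_def using kernel_space pair_measurable
      by (simp add: distr_distr comp_def distr_id2)
  qed
  then have coupling: "\<pi> \<in> couplings (distr M borel g) (M \<bind> \<kappa>)"
    unfolding couplings_def \<pi>_def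
    using fst_marginal prob_space_bind'[OF M_prob N] sets_bind'[OF M_prob N] by (simp add: \<pi>_def)
  have cost: "(\<integral>\<^sup>+z. ennreal ((fst z - snd z)\<^sup>2) \<partial>\<pi>) = (\<integral>\<^sup>+\<omega>. \<integral>\<^sup>+t. ennreal ((t - g \<omega>)\<^sup>2) \<partial>\<kappa> \<omega> \<partial>M)"
    unfolding \<pi>_def
  proof (subst nn_integral_bind[OF _ N_subprob], simp, rule nn_integral_cong)
    fix \<omega> assume \<omega>: "\<omega> \<in> space M"
    have "(\<integral>\<^sup>+z. ennreal ((fst z - snd z)\<^sup>2) \<partial>N \<omega>) = (\<integral>\<^sup>+t. ennreal ((g \<omega> - t)\<^sup>2) \<partial>\<kappa> \<omega>)"
      unfolding N_def by (subst nn_integral_distr[OF pair_measurable[OF \<omega>]]) auto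
    then show "(\<integral>\<^sup>+z. ennreal ((fst z - snd z)\<^sup>2) \<partial>N \<omega>) = (\<integral>\<^sup>+t. ennreal ((t - g \<omega>)\<^sup>2) \<partial>\<kappa> \<omega>)"
      by (simp only: power2_commute)
  qed
  show ?thesis
    unfolding W2sq_def cost[symmetric] using coupling by (rule INF_lower)
qed

definition grid_cell :: "real \<Rightarrow> real \<Rightarrow> int" where
  "grid_cell e t = \<lfloor>t / e\<rfloor>"

lemma measurable_grid_cell [measurable]: "grid_cell e \<in> borel \<rightarrow>\<^sub>M count_space UNIV"
  unfolding grid_cell_def by measurable

lemma sets_grid_cell_vimage [measurable]: "grid_cell e -` {j} \<in> sets borel"
  using measurable_sets[OF measurable_grid_cell, of "{j}"] by simp

lemma grid_cell_eq_imp_dist_less: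
  assumes "e > 0" "grid_cell e t = grid_cell e t'"
  shows "\<bar>t - t'\<bar> < e"
proof -
  have "\<bar>t / e - t' / e\<bar> < 1"
    using assms(2) unfolding grid_cell_def by linarith
  then show ?thesis
    using assms(1) by (simp add: diff_divide_distrib[symmetric] divide_less_eq)
qed

lemma power2_diff_le_perturbed:
  fixes s t t' e :: real
  assumes "e > 0" "\<bar>t - t'\<bar> < e"
  shows "(s - t)\<^sup>2 \<le> (1 + e) * (s - t')\<^sup>2 + (e + e\<^sup>2)"
proof -
  define u where "u = s - t'"
  define v where "v = t' - t"
  have "\<bar>v\<bar> \<le> \<bar>e\<bar>"
    using assms by (simp add: v_def abs_minus_commute)
  then have v2: "v\<^sup>2 \<le> e\<^sup>2"
    by (simp add: abs_le_square_iff)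
  have "0 \<le> (e * u - v)\<^sup>2 / e"
    using assms by simp
  also have "\<dots> = e * u\<^sup>2 - 2 * u * v + v\<^sup>2 / e"
    using assms by (simp add: power2_eq_square field_simps)
  finally have "2 * u * v \<le> e * u\<^sup>2 + v\<^sup>2 / e"
    by simp
  moreover have "v\<^sup>2 / e \<le> e"
    using v2 assms by (simp add: divide_le_eq power2_eq_square)
  moreover have "(s - t)\<^sup>2 = u\<^sup>2 + 2 * u * v + v\<^sup>2"
    by (simp add: u_def v_def power2_eq_square algebra_simps)
  ultimately show ?thesis
    using v2 by (simp add: u_def algebra_simps)
qed

text \<open>A discrete substitute for disintegrating P along its first coordinate.\<close>

definition cell_kernel :: "(real \<times> real) measure \<Rightarrow> real \<Rightarrow> int \<Rightarrow> real measure" where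
  "cell_kernel P e j =
     (if emeasure P (grid_cell e -` {j} \<times> UNIV) = 0 then return borel 0
      else distr (uniform_measure P (grid_cell e -` {j} \<times> UNIV)) borel snd)"

locale real_pair_prob = prob_space P for P :: "(real \<times> real) measure" +
  assumes sets_P [measurable_cong]: "sets P = sets (borel \<Otimes>\<^sub>M borel)"
begin

lemma space_P [simp]: "space P = UNIV"
  using sets_eq_imp_space_eq[OF sets_P] by (simp add: space_pair_measure)

lemma emeasure_P_UNIV [simp]: "emeasure P UNIV = 1"
  using emeasure_space_1 by simp

lemma sets_Times_P [measurable]: "A \<in> sets borel \<Longrightarrow> B \<in> sets borel \<Longrightarrow> A \<times> B \<in> sets P"
  unfolding sets_P by (rule pair_measureI)

lemma cell_kernel_prob_algebra: "cell_kernel P e j \<in> space (prob_algebra borel)"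
proof (cases "emeasure P (grid_cell e -` {j} \<times> UNIV) = 0")
  case False
  then have "prob_space (uniform_measure P (grid_cell e -` {j} \<times> UNIV))"
    by (intro prob_space_uniform_measure) auto
  then have "prob_space (distr (uniform_measure P (grid_cell e -` {j} \<times> UNIV)) borel snd)"
    by (rule prob_space.prob_space_distr) simp
  with False show ?thesis
    by (simp add: cell_kernel_def space_prob_algebra)
qed (simp add: cell_kernel_def space_prob_algebra prob_space_return)

lemma measurable_cell_kernel [measurable]:
  "(\<lambda>t. cell_kernel P e (grid_cell e t)) \<in> borel \<rightarrow>\<^sub>M prob_algebra borel"
  using cell_kernel_prob_algebra by (intro measurable_compose[OF measurable_grid_cell]) simp

lemma measurable_cell_kernel_subprob [measurable]:
  "(\<lambda>t. cell_kernel P e (grid_cell e t)) \<in> borel \<rightarrow>\<^sub>M subprob_algebra borel"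
  using measurable_cell_kernel by (rule measurable_prob_algebraD)

lemma nn_integral_cell_kernel:
  assumes "emeasure P (grid_cell e -` {j} \<times> UNIV) \<noteq> 0" and [measurable]: "g \<in> borel_measurable borel"
  shows "(\<integral>\<^sup>+s. g s \<partial>cell_kernel P e j)
       = (\<integral>\<^sup>+z. g (snd z) * indicator (grid_cell e -` {j} \<times> UNIV) z \<partial>P)
           / emeasure P (grid_cell e -` {j} \<times> UNIV)"
  using assms(1) by (simp add: cell_kernel_def nn_integral_distr nn_integral_uniform_measure)

lemma emeasure_cell_kernel_mult:
  assumes "B \<in> sets borel"
  shows "emeasure (cell_kernel P e j) B * emeasure P (grid_cell e -` {j} \<times> UNIV)
       = emeasure P (grid_cell e -` {j} \<times> B)"
proof (cases "emeasure P (grid_cell e -` {j} \<times> UNIV) = 0")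
  case True
  moreover have "emeasure P (grid_cell e -` {j} \<times> B) \<le> emeasure P (grid_cell e -` {j} \<times> UNIV)"
    using assms by (intro emeasure_mono) auto
  ultimately show ?thesis
    by simp
next
  case False
  have "snd -` B \<inter> space (uniform_measure P (grid_cell e -` {j} \<times> UNIV)) = UNIV \<times> B"
    by auto
  then have "emeasure (cell_kernel P e j) B
      = emeasure (uniform_measure P (grid_cell e -` {j} \<times> UNIV)) (UNIV \<times> B)"
    using False assms by (simp add: cell_kernel_def emeasure_distr)
  also have "\<dots> = emeasure P (grid_cell e -` {j} \<times> B) / emeasure P (grid_cell e -` {j} \<times> UNIV)"
    using assms by (simp add: Times_Int_Times)
  finally show ?thesis
    using False emeasure_finite[of "grid_cell e -` {j} \<times> UNIV"]
    by (metis ennreal_divide_times ennreal_divide_self mult_1_right top.not_eq_extremum)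
qed

lemma nn_integral_grid_cells_partition:
  assumes [measurable]: "f \<in> borel_measurable P"
  shows "(\<integral>\<^sup>+j. \<integral>\<^sup>+z. f z * indicator (grid_cell e -` {j} \<times> UNIV) z \<partial>P \<partial>count_space UNIV)
       = (\<integral>\<^sup>+z. f z \<partial>P)"
proof -
  have "(\<lambda>j. f z * indicator (grid_cell e -` {j} \<times> UNIV) z) = (\<lambda>j. f z * indicator {grid_cell e (fst z)} j)"
    for z :: "real \<times> real"
    by (auto simp: indicator_def mem_Times_iff)
  then have "(\<integral>\<^sup>+z. \<integral>\<^sup>+j. f z * indicator (grid_cell e -` {j} \<times> UNIV) z \<partial>count_space UNIV \<partial>P)
      = (\<integral>\<^sup>+z. f z \<partial>P)"
    by simp
  then show ?thesis
    by (subst nn_integral_count_space_nn_integral[symmetric]) auto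
qed

lemma nn_integral_grid_cell:
  "(\<integral>\<^sup>+z. \<phi> (grid_cell e (fst z)) \<partial>P)
     = (\<integral>\<^sup>+j. \<phi> j * emeasure P (grid_cell e -` {j} \<times> UNIV) \<partial>count_space UNIV)"
proof -
  have cell: "\<phi> (grid_cell e (fst z)) * indicator (grid_cell e -` {j} \<times> UNIV) z
      = \<phi> j * indicator (grid_cell e -` {j} \<times> UNIV) z" for j z
    by (cases z) (simp split: split_indicator)
  have "(\<integral>\<^sup>+z. \<phi> (grid_cell e (fst z)) \<partial>P)
      = (\<integral>\<^sup>+j. \<integral>\<^sup>+z. \<phi> (grid_cell e (fst z)) * indicator (grid_cell e -` {j} \<times> UNIV) z \<partial>P
           \<partial>count_space UNIV)"
    by (rule nn_integral_grid_cells_partition[symmetric]) measurable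
  also have "\<dots> = (\<integral>\<^sup>+j. \<integral>\<^sup>+z. \<phi> j * indicator (grid_cell e -` {j} \<times> UNIV) z \<partial>P \<partial>count_space UNIV)"
    by (simp only: cell)
  also have "\<dots> = (\<integral>\<^sup>+j. \<phi> j * emeasure P (grid_cell e -` {j} \<times> UNIV) \<partial>count_space UNIV)"
    by (intro nn_integral_cong nn_integral_cmult_indicator) measurable
  finally show ?thesis .
qed

lemma bind_fst_cell_kernel:
  "distr P borel fst \<bind> (\<lambda>t. cell_kernel P e (grid_cell e t)) = distr P borel snd"
proof (rule measure_eqI)
  note kernel = measurable_cell_kernel[of e]
  have marginal: "distr P borel fst \<in> space (prob_algebra borel)"
    by (simp add: space_prob_algebra prob_space_distr)
  show sets_eq: "sets (distr P borel fst \<bind> (\<lambda>t. cell_kernel P e (grid_cell e t))) = sets (distr P borel snd)"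
    using sets_bind'[OF marginal kernel] by simp
  fix B assume "B \<in> sets (distr P borel fst \<bind> (\<lambda>t. cell_kernel P e (grid_cell e t)))"
  then have B [measurable]: "B \<in> sets borel"
    using sets_eq by simp
  have "emeasure (distr P borel fst \<bind> (\<lambda>t. cell_kernel P e (grid_cell e t))) B
      = (\<integral>\<^sup>+z. emeasure (cell_kernel P e (grid_cell e (fst z))) B \<partial>P)"
    by (simp add: emeasure_bind_prob_algebra[OF marginal kernel] nn_integral_distr)
  also have "\<dots> = (\<integral>\<^sup>+j. emeasure P (grid_cell e -` {j} \<times> B) \<partial>count_space UNIV)"
    using nn_integral_grid_cell[of "\<lambda>j. emeasure (cell_kernel P e j) B" e]
    by (simp add: emeasure_cell_kernel_mult)
  also have "\<dots> = (\<integral>\<^sup>+j. \<integral>\<^sup>+z. indicator (UNIV \<times> B) z * indicator (grid_cell e -` {j} \<times> UNIV) z \<partial>P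
                    \<partial>count_space UNIV)"
    by (simp add: Times_Int_Times flip: indicator_inter_arith)
  also have "\<dots> = emeasure P (UNIV \<times> B)"
    by (subst nn_integral_grid_cells_partition) simp_all
  also have "\<dots> = emeasure (distr P borel snd) B"
  proof -
    have "snd -` B \<inter> space P = UNIV \<times> B"
      by auto
    then show ?thesis
      by (simp add: emeasure_distr)
  qed
  finally show "emeasure (distr P borel fst \<bind> (\<lambda>t. cell_kernel P e (grid_cell e t))) B
      = emeasure (distr P borel snd) B" .
qed

lemma nn_integral_cell_kernel_power2_le:
  assumes e: "e > 0" and "emeasure P (grid_cell e -` {grid_cell e t} \<times> UNIV) \<noteq> 0"
  shows "(\<integral>\<^sup>+s. ennreal ((s - t)\<^sup>2) \<partial>cell_kernel P e (grid_cell e t))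
       \<le> (\<integral>\<^sup>+z. ennreal ((1 + e) * (fst z - snd z)\<^sup>2 + (e + e\<^sup>2)) *
             indicator (grid_cell e -` {grid_cell e t} \<times> UNIV) z \<partial>P)
           / emeasure P (grid_cell e -` {grid_cell e t} \<times> UNIV)"
proof -
  have "ennreal ((snd z - t)\<^sup>2) * indicator (grid_cell e -` {grid_cell e t} \<times> UNIV) z
      \<le> ennreal ((1 + e) * (fst z - snd z)\<^sup>2 + (e + e\<^sup>2)) * indicator (grid_cell e -` {grid_cell e t} \<times> UNIV) z"
    for z
  proof (cases "z \<in> grid_cell e -` {grid_cell e t} \<times> UNIV")
    case True
    then have "\<bar>t - fst z\<bar> < e"
      by (intro grid_cell_eq_imp_dist_less[OF e]) auto
    then have "(snd z - t)\<^sup>2 \<le> (1 + e) * (fst z - snd z)\<^sup>2 + (e + e\<^sup>2)"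
      using power2_diff_le_perturbed[OF e] by (metis power2_commute)
    with True show ?thesis
      by (simp add: ennreal_leI)
  qed simp
  with assms(2) show ?thesis
    by (simp add: nn_integral_cell_kernel divide_right_mono_ennreal nn_integral_mono)
qed

lemma cell_kernel_cost:
  assumes e: "e > 0"
  shows "(\<integral>\<^sup>+t. \<integral>\<^sup>+s. ennreal ((s - t)\<^sup>2) \<partial>cell_kernel P e (grid_cell e t) \<partial>distr P borel fst)
       \<le> ennreal (1 + e) * (\<integral>\<^sup>+z. ennreal ((fst z - snd z)\<^sup>2) \<partial>P) + ennreal (e + e\<^sup>2)"
proof -
  define C where "C j = grid_cell e -` {j} \<times> (UNIV :: real set)" for j
  define c where "c z = ennreal ((1 + e) * (fst z - snd z)\<^sup>2 + (e + e\<^sup>2))" for z :: "real \<times> real"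
  define V where "V j = (\<integral>\<^sup>+z. c z * indicator (C j) z \<partial>P)" for j
  define bound where "bound j = (if emeasure P (C j) = 0 then \<top> else V j / emeasure P (C j))" for j
  have [measurable]: "c \<in> borel_measurable P" "C j \<in> sets P" for j
    unfolding c_def C_def by measurable
  have pointwise: "(\<integral>\<^sup>+s. ennreal ((s - t)\<^sup>2) \<partial>cell_kernel P e (grid_cell e t)) \<le> bound (grid_cell e t)"
    for t
    using nn_integral_cell_kernel_power2_le[OF e, of t]
    by (cases "emeasure P (C (grid_cell e t)) = 0") (simp_all add: bound_def V_def C_def c_def)
  have "(\<integral>\<^sup>+t. \<integral>\<^sup>+s. ennreal ((s - t)\<^sup>2) \<partial>cell_kernel P e (grid_cell e t) \<partial>distr P borel fst)
      \<le> (\<integral>\<^sup>+z. bound (grid_cell e (fst z)) \<partial>P)"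
  proof -
    have "(\<lambda>t. \<integral>\<^sup>+s. ennreal ((s - t)\<^sup>2) \<partial>cell_kernel P e (grid_cell e t)) \<in> borel_measurable borel"
      by (rule nn_integral_measurable_subprob_algebra2[OF _ measurable_cell_kernel_subprob]) measurable
    then show ?thesis
      by (simp add: nn_integral_distr nn_integral_mono pointwise)
  qed
  also have "\<dots> = (\<integral>\<^sup>+j. bound j * emeasure P (C j) \<partial>count_space UNIV)"
    unfolding C_def by (rule nn_integral_grid_cell)
  also have "\<dots> \<le> (\<integral>\<^sup>+j. V j \<partial>count_space UNIV)"
  proof (intro nn_integral_mono)
    fix j
    show "bound j * emeasure P (C j) \<le> V j"
    proof (cases "emeasure P (C j) = 0")
      case False
      moreover have "emeasure P (C j) < \<top>"
        by (simp add: less_top[symmetric])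
      ultimately show ?thesis
        by (simp add: bound_def ennreal_divide_times ennreal_divide_self)
    qed (simp add: bound_def)
  qed
  also have "\<dots> = (\<integral>\<^sup>+z. c z \<partial>P)"
    unfolding V_def C_def by (rule nn_integral_grid_cells_partition) simp
  also have "\<dots> = ennreal (1 + e) * (\<integral>\<^sup>+z. ennreal ((fst z - snd z)\<^sup>2) \<partial>P) + ennreal (e + e\<^sup>2)"
    using e by (simp add: c_def ennreal_plus ennreal_mult nn_integral_add nn_integral_cmult)
  finally show ?thesis .
qed

end

lemma real_pair_prob_coupling: "\<pi> \<in> couplings p q \<Longrightarrow> real_pair_prob \<pi>"
  unfolding couplings_def real_pair_prob_def real_pair_prob_axioms_def by auto

section \<open>The fair regression problem\<close>

locale fair_regression =
  fixes MX :: "'x measure" and mu :: "('x \<times> 'a::finite \<times> real) measure"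
    and fstar :: "'x \<times> 'a \<Rightarrow> real"
  assumes prob_space_mu: "prob_space mu"
    and sets_mu [measurable_cong]: "sets mu = sets (MX \<Otimes>\<^sub>M (count_space UNIV \<Otimes>\<^sub>M borel))"
    and grp_weight_pos: "\<And>a. grp_weight mu a > 0"
    and measurable_fstar [measurable]: "fstar \<in> borel_measurable (MX \<Otimes>\<^sub>M count_space UNIV)"
begin

interpretation mu: prob_space mu
  by (rule prob_space_mu)

abbreviation regressors :: "('x \<times> 'a \<Rightarrow> real measure) set" where
  "regressors \<equiv> MX \<Otimes>\<^sub>M count_space UNIV \<rightarrow>\<^sub>M prob_algebra borel"

lemma measurable_features [measurable]:
  "(\<lambda>\<omega>. (fst \<omega>, fst (snd \<omega>))) \<in> mu \<rightarrow>\<^sub>M MX \<Otimes>\<^sub>M count_space UNIV"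
  by measurable

lemma sets_grp_event [measurable]: "grp_event a \<in> sets mu"
proof (rule ccontr)
  assume "grp_event a \<notin> sets mu"
  then have "grp_weight mu a = 0"
    by (metis grp_weight_def measure_notin_sets)
  with grp_weight_pos[of a] show False
    by simp
qed

lemma emeasure_grp_event: "emeasure mu (grp_event a) = ennreal (grp_weight mu a)"
  unfolding grp_weight_def by (rule mu.emeasure_eq_measure)

definition grp_cond :: "'a \<Rightarrow> ('x \<times> 'a \<times> real) measure" where
  "grp_cond a = uniform_measure mu (grp_event a)"

lemma sets_grp_cond [simp, measurable_cong]: "sets (grp_cond a) = sets mu"
  by (simp add: grp_cond_def)

lemma space_grp_cond [simp]: "space (grp_cond a) = space mu"
  by (simp add: grp_cond_def)

lemma prob_space_grp_cond: "prob_space (grp_cond a)"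
  unfolding grp_cond_def using grp_weight_pos[of a]
  by (intro prob_space_uniform_measure) (auto simp: emeasure_grp_event)

lemma grp_cond_in_prob_algebra: "grp_cond a \<in> space (prob_algebra mu)"
  using prob_space_grp_cond by (simp add: space_prob_algebra)

lemma AE_grp_cond: "AE \<omega> in grp_cond a. fst (snd \<omega>) = a"
  unfolding grp_cond_def by (rule AE_uniform_measureI[OF sets_grp_event]) (simp add: grp_event_def)

lemma nn_integral_grp_decomp:
  assumes [measurable]: "h \<in> borel_measurable mu"
  shows "(\<integral>\<^sup>+\<omega>. h \<omega> \<partial>mu) = (\<Sum>a\<in>UNIV. ennreal (grp_weight mu a) * (\<integral>\<^sup>+\<omega>. h \<omega> \<partial>grp_cond a))"
proof -
  have "(\<integral>\<^sup>+\<omega>. h \<omega> \<partial>mu) = (\<integral>\<^sup>+\<omega>. (\<Sum>a\<in>UNIV. h \<omega> * indicator (grp_event a) \<omega>) \<partial>mu)"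
    by (rule nn_integral_cong) (simp add: grp_event_def indicator_def)
  also have "\<dots> = (\<Sum>a\<in>UNIV. \<integral>\<^sup>+\<omega>. h \<omega> * indicator (grp_event a) \<omega> \<partial>mu)"
    by (rule nn_integral_sum) auto
  also have "\<dots> = (\<Sum>a\<in>UNIV. ennreal (grp_weight mu a) * (\<integral>\<^sup>+\<omega>. h \<omega> \<partial>grp_cond a))"
  proof (rule sum.cong[OF refl])
    fix a
    have "emeasure mu (grp_event a) \<noteq> 0"
      using grp_weight_pos[of a] by (simp add: emeasure_grp_event)
    then show "(\<integral>\<^sup>+\<omega>. h \<omega> * indicator (grp_event a) \<omega> \<partial>mu)
        = ennreal (grp_weight mu a) * (\<integral>\<^sup>+\<omega>. h \<omega> \<partial>grp_cond a)"
      by (simp add: grp_cond_def nn_integral_uniform_measure ennreal_times_divide mult.commute[of "emeasure mu _"]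
          mult_divide_eq_ennreal mu.emeasure_finite flip: emeasure_grp_event)
  qed
  finally show ?thesis .
qed

lemma measurable_regressor_at_features:
  assumes "K \<in> regressors"
  shows "(\<lambda>\<omega>. K (fst \<omega>, fst (snd \<omega>))) \<in> mu \<rightarrow>\<^sub>M prob_algebra borel"
  using assms by (intro measurable_compose[OF measurable_features])

lemma cond_out_dist_in_prob_measures_R:
  assumes "K \<in> regressors"
  shows "cond_out_dist mu K a \<in> prob_measures_R"
  using prob_space_bind'[OF grp_cond_in_prob_algebra measurable_regressor_at_features[OF assms]]
    sets_bind'[OF grp_cond_in_prob_algebra measurable_regressor_at_features[OF assms]]
  by (simp add: prob_measures_R_def cond_out_dist_def grp_cond_def)

lemma excess_risk_grp_decomp:
  assumes K: "K \<in> regressors"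
  shows "excess_risk mu fstar K
       = (\<Sum>a\<in>UNIV. ennreal (grp_weight mu a) *
            (\<integral>\<^sup>+\<omega>. \<integral>\<^sup>+t. ennreal ((t - fstar (fst \<omega>, fst (snd \<omega>)))\<^sup>2) \<partial>K (fst \<omega>, fst (snd \<omega>)) \<partial>grp_cond a))"
proof -
  have "(\<lambda>\<omega>. K (fst \<omega>, fst (snd \<omega>))) \<in> mu \<rightarrow>\<^sub>M subprob_algebra borel"
    using measurable_regressor_at_features[OF K] by (rule measurable_prob_algebraD)
  then have "(\<lambda>\<omega>. \<integral>\<^sup>+t. ennreal ((t - fstar (fst \<omega>, fst (snd \<omega>)))\<^sup>2) \<partial>K (fst \<omega>, fst (snd \<omega>)))
      \<in> borel_measurable mu"
    by (rule nn_integral_measurable_subprob_algebra2[rotated]) measurable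
  then show ?thesis
    unfolding excess_risk_def by (rule nn_integral_grp_decomp)
qed

lemma weighted_W2sq_le_excess_risk:
  assumes K: "K \<in> regressors"
  shows "(\<Sum>a\<in>UNIV. ennreal (grp_weight mu a) * W2sq (cond_bayes_dist mu fstar a) (cond_out_dist mu K a))
       \<le> excess_risk mu fstar K"
  unfolding excess_risk_grp_decomp[OF K]
proof (intro sum_mono mult_left_mono)
  fix a
  have "(\<lambda>\<omega>. K (fst \<omega>, fst (snd \<omega>))) \<in> grp_cond a \<rightarrow>\<^sub>M prob_algebra borel"
    using measurable_regressor_at_features[OF K] by simp
  from W2sq_distr_bind_le[OF prob_space_grp_cond _ this, of "\<lambda>\<omega>. fstar (fst \<omega>, fst (snd \<omega>))"]
  show "W2sq (cond_bayes_dist mu fstar a) (cond_out_dist mu K a)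
      \<le> (\<integral>\<^sup>+\<omega>. \<integral>\<^sup>+t. ennreal ((t - fstar (fst \<omega>, fst (snd \<omega>)))\<^sup>2) \<partial>K (fst \<omega>, fst (snd \<omega>)) \<partial>grp_cond a)"
    by (simp add: cond_bayes_dist_def cond_out_dist_def grp_cond_def)
qed simp

definition cell_regressor :: "('a \<Rightarrow> (real \<times> real) measure) \<Rightarrow> real \<Rightarrow> 'x \<times> 'a \<Rightarrow> real measure" where
  "cell_regressor \<pi> e z = cell_kernel (\<pi> (snd z)) e (grid_cell e (fstar z))"

lemma cell_regressor_in_regressors:
  assumes "\<And>a. real_pair_prob (\<pi> a)"
  shows "cell_regressor \<pi> e \<in> regressors"
  unfolding cell_regressor_def
  by (rule measurable_compose_countable'[where f="\<lambda>a z. cell_kernel (\<pi> a) e (grid_cell e (fstar z))" and g=snd and I=UNIV])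
    (auto intro: measurable_compose[OF measurable_fstar real_pair_prob.measurable_cell_kernel[OF assms]])

lemma AE_cell_regressor:
  "AE \<omega> in grp_cond a. cell_regressor \<pi> e (fst \<omega>, fst (snd \<omega>))
                       = cell_kernel (\<pi> a) e (grid_cell e (fstar (fst \<omega>, fst (snd \<omega>))))"
  using AE_grp_cond[of a] by eventually_elim (simp add: cell_regressor_def)

lemma cond_out_dist_cell_regressor:
  assumes couplings: "\<And>a. \<pi> a \<in> couplings (cond_bayes_dist mu fstar a) (Q a)"
  shows "cond_out_dist mu (cell_regressor \<pi> e) a = Q a"
proof -
  interpret \<pi>: real_pair_prob "\<pi> a"
    using couplings[of a] by (rule real_pair_prob_coupling)
  have K: "cell_regressor \<pi> e \<in> regressors"
    using couplings by (intro cell_regressor_in_regressors real_pair_prob_coupling)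
  have "cond_out_dist mu (cell_regressor \<pi> e) a = grp_cond a \<bind> (\<lambda>\<omega>. cell_regressor \<pi> e (fst \<omega>, fst (snd \<omega>)))"
    by (simp add: cond_out_dist_def grp_cond_def)
  also have "\<dots> = grp_cond a \<bind> (\<lambda>\<omega>. cell_kernel (\<pi> a) e (grid_cell e (fstar (fst \<omega>, fst (snd \<omega>)))))"
    using grp_cond_in_prob_algebra measurable_regressor_at_features[OF K] _ AE_cell_regressor
    by (rule bind_cong_AE') measurable
  also have "\<dots> = cond_bayes_dist mu fstar a \<bind> (\<lambda>t. cell_kernel (\<pi> a) e (grid_cell e t))"
    unfolding cond_bayes_dist_def grp_cond_def[symmetric]
    by (rule bind_distr[where K=borel, symmetric]) (simp_all add: prob_space.not_empty[OF prob_space_mu])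
  also have "\<dots> = Q a"
    using couplings[of a] \<pi>.bind_fst_cell_kernel[of e] by (simp add: couplings_def)
  finally show ?thesis .
qed

lemma excess_risk_cell_regressor_le:
  assumes couplings: "\<And>a. \<pi> a \<in> couplings (cond_bayes_dist mu fstar a) (Q a)" and e: "e > 0"
  shows "excess_risk mu fstar (cell_regressor \<pi> e) \<le> (\<Sum>a\<in>UNIV. ennreal (grp_weight mu a) *
           (ennreal (1 + e) * (\<integral>\<^sup>+z. ennreal ((fst z - snd z)\<^sup>2) \<partial>\<pi> a) + ennreal (e + e\<^sup>2)))"
  unfolding excess_risk_grp_decomp[OF cell_regressor_in_regressors[OF real_pair_prob_coupling[OF couplings]]]
proof (intro sum_mono mult_left_mono)
  fix a
  interpret \<pi>: real_pair_prob "\<pi> a"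
    using couplings[of a] by (rule real_pair_prob_coupling)
  define fp where "fp \<omega> = fstar (fst \<omega>, fst (snd \<omega>))" for \<omega> :: "'x \<times> 'a \<times> real"
  have [measurable]: "fp \<in> borel_measurable (grp_cond a)"
    unfolding fp_def by measurable
  have [measurable]: "(\<lambda>t. \<integral>\<^sup>+s. ennreal ((s - t)\<^sup>2) \<partial>cell_kernel (\<pi> a) e (grid_cell e t)) \<in> borel_measurable borel"
    by (rule nn_integral_measurable_subprob_algebra2) measurable
  have "(\<integral>\<^sup>+\<omega>. \<integral>\<^sup>+t. ennreal ((t - fstar (fst \<omega>, fst (snd \<omega>)))\<^sup>2) \<partial>cell_regressor \<pi> e (fst \<omega>, fst (snd \<omega>))
          \<partial>grp_cond a)
      = (\<integral>\<^sup>+\<omega>. \<integral>\<^sup>+s. ennreal ((s - fp \<omega>)\<^sup>2) \<partial>cell_kernel (\<pi> a) e (grid_cell e (fp \<omega>)) \<partial>grp_cond a)"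
    using AE_cell_regressor[of \<pi> e a] by (intro nn_integral_cong_AE) (auto simp: fp_def)
  also have "\<dots> = (\<integral>\<^sup>+t. \<integral>\<^sup>+s. ennreal ((s - t)\<^sup>2) \<partial>cell_kernel (\<pi> a) e (grid_cell e t) \<partial>distr (\<pi> a) borel fst)"
    using couplings[of a]
    by (simp add: nn_integral_distr couplings_def cond_bayes_dist_def fp_def[abs_def] flip: grp_cond_def)
  also have "\<dots> \<le> ennreal (1 + e) * (\<integral>\<^sup>+z. ennreal ((fst z - snd z)\<^sup>2) \<partial>\<pi> a) + ennreal (e + e\<^sup>2)"
    using e by (rule \<pi>.cell_kernel_cost)
  finally show "(\<integral>\<^sup>+\<omega>. \<integral>\<^sup>+t. ennreal ((t - fstar (fst \<omega>, fst (snd \<omega>)))\<^sup>2) \<partial>cell_regressor \<pi> e (fst \<omega>, fst (snd \<omega>))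
          \<partial>grp_cond a)
      \<le> ennreal (1 + e) * (\<integral>\<^sup>+z. ennreal ((fst z - snd z)\<^sup>2) \<partial>\<pi> a) + ennreal (e + e\<^sup>2)" .
qed simp

lemma INF_weighted_W2sq_le_excess_risk:
  assumes K: "K \<in> regressors" and gap: "sp_gap mu K \<le> alpha"
  shows "(INF (q, Q) \<in> {(q, Q). q \<in> prob_measures_R \<and>
                          (\<forall>a. Q a \<in> prob_measures_R \<and> D_KS (Q a) q \<le> alpha / 2)}.
            (\<Sum>a\<in>UNIV. ennreal (grp_weight mu a) * W2sq (cond_bayes_dist mu fstar a) (Q a)))
       \<le> excess_risk mu fstar K"
proof -
  obtain q where "q \<in> prob_measures_R" "\<forall>a. D_KS (cond_out_dist mu K a) q \<le> alpha / 2"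
    using KS_center_exists[of "cond_out_dist mu K" alpha] cond_out_dist_in_prob_measures_R[OF K] gap
    by (auto simp: sp_gap_le_iff)
  then have "(q, cond_out_dist mu K) \<in> {(q, Q). q \<in> prob_measures_R \<and>
                          (\<forall>a. Q a \<in> prob_measures_R \<and> D_KS (Q a) q \<le> alpha / 2)}"
    using cond_out_dist_in_prob_measures_R[OF K] by simp
  then have "(INF (q, Q) \<in> {(q, Q). q \<in> prob_measures_R \<and>
                          (\<forall>a. Q a \<in> prob_measures_R \<and> D_KS (Q a) q \<le> alpha / 2)}.
            (\<Sum>a\<in>UNIV. ennreal (grp_weight mu a) * W2sq (cond_bayes_dist mu fstar a) (Q a)))
      \<le> (\<Sum>a\<in>UNIV. ennreal (grp_weight mu a) * W2sq (cond_bayes_dist mu fstar a) (cond_out_dist mu K a))"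
    by (rule INF_lower2) simp
  also have "\<dots> \<le> excess_risk mu fstar K"
    using K by (rule weighted_W2sq_le_excess_risk)
  finally show ?thesis .
qed

lemma INF_excess_risk_le_perturbed_W2sq:
  assumes Q: "\<And>a. Q a \<in> prob_measures_R" and q: "q \<in> prob_measures_R"
    and close: "\<And>a. D_KS (Q a) q \<le> alpha / 2"
    and finite: "\<And>a. W2sq (cond_bayes_dist mu fstar a) (Q a) \<noteq> \<top>" and e: "e > 0"
  shows "(INF K \<in> {K \<in> regressors. sp_gap mu K \<le> alpha}. excess_risk mu fstar K)
       \<le> (\<Sum>a\<in>UNIV. ennreal (grp_weight mu a) *
           (ennreal (1 + e) * (W2sq (cond_bayes_dist mu fstar a) (Q a) + ennreal e) + ennreal (e + e\<^sup>2)))"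
proof -
  have "\<exists>\<pi>. \<pi> \<in> couplings (cond_bayes_dist mu fstar a) (Q a) \<and>
            (\<integral>\<^sup>+z. ennreal ((fst z - snd z)\<^sup>2) \<partial>\<pi>) < W2sq (cond_bayes_dist mu fstar a) (Q a) + ennreal e"
    for a
  proof -
    have "W2sq (cond_bayes_dist mu fstar a) (Q a) < W2sq (cond_bayes_dist mu fstar a) (Q a) + ennreal e"
      using finite[of a] e
      by (cases "W2sq (cond_bayes_dist mu fstar a) (Q a)") (auto intro!: ennreal_lessI simp flip: ennreal_plus)
    then show ?thesis
      by (subst (asm) (1) W2sq_def) (simp add: INF_less_iff Bex_def)
  qed
  then obtain \<pi> where \<pi>: "\<And>a. \<pi> a \<in> couplings (cond_bayes_dist mu fstar a) (Q a)"
    and cost: "\<And>a. (\<integral>\<^sup>+z. ennreal ((fst z - snd z)\<^sup>2) \<partial>\<pi> a) < W2sq (cond_bayes_dist mu fstar a) (Q a) + ennreal e"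
    by metis
  have "sp_gap mu (cell_regressor \<pi> e) \<le> alpha"
    using q Q close by (intro sp_gap_le_if_in_KS_ball) (simp_all add: cond_out_dist_cell_regressor[OF \<pi>])
  then have "(INF K \<in> {K \<in> regressors. sp_gap mu K \<le> alpha}. excess_risk mu fstar K)
      \<le> excess_risk mu fstar (cell_regressor \<pi> e)"
    using cell_regressor_in_regressors[OF real_pair_prob_coupling[OF \<pi>]] by (intro INF_lower) simp
  also have "\<dots> \<le> (\<Sum>a\<in>UNIV. ennreal (grp_weight mu a) *
           (ennreal (1 + e) * (W2sq (cond_bayes_dist mu fstar a) (Q a) + ennreal e) + ennreal (e + e\<^sup>2)))"
    using excess_risk_cell_regressor_le[OF \<pi> e]
    by (rule order_trans) (intro sum_mono mult_left_mono add_right_mono less_imp_le[OF cost]; simp)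
  finally show ?thesis .
qed

lemma INF_excess_risk_le_weighted_W2sq:
  assumes Q: "\<And>a. Q a \<in> prob_measures_R" and q: "q \<in> prob_measures_R"
    and close: "\<And>a. D_KS (Q a) q \<le> alpha / 2"
  shows "(INF K \<in> {K \<in> regressors. sp_gap mu K \<le> alpha}. excess_risk mu fstar K)
       \<le> (\<Sum>a\<in>UNIV. ennreal (grp_weight mu a) * W2sq (cond_bayes_dist mu fstar a) (Q a))"
    (is "?inf \<le> ?obj")
proof (cases "\<exists>a. W2sq (cond_bayes_dist mu fstar a) (Q a) = \<top>")
  case True
  with grp_weight_pos have "?obj = \<top>"
    by (fastforce simp: ennreal_mult_eq_top_iff ennreal_eq_0_iff not_le)
  then show ?thesis
    by (simp only:) (rule top_greatest)
next
  case False
  define bound where "bound e = (\<Sum>a\<in>UNIV. ennreal (grp_weight mu a) *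
      (ennreal (1 + e) * (W2sq (cond_bayes_dist mu fstar a) (Q a) + ennreal e) + ennreal (e + e\<^sup>2)))"
    for e :: real
  have "?inf \<le> bound e" if "e > 0" for e
    unfolding bound_def using False that by (intro INF_excess_risk_le_perturbed_W2sq[OF Q q close]) auto
  then have eventually_le: "\<forall>\<^sub>F e in at_right 0. ?inf \<le> bound e"
    using eventually_at_right_less[of 0] by (auto elim: eventually_mono)
  have lim: "(bound \<longlongrightarrow> bound 0) (at_right 0)"
    unfolding bound_def using False by (intro tendsto_intros) auto
  have "?inf \<le> bound 0"
    using tendsto_lowerbound[OF lim eventually_le] trivial_limit_at_right_real[of 0] by simp
  then show ?thesis
    by (simp add: bound_def)
qed

end

theorem theorem1:
  fixes MX :: "'x measure"
    and mu :: "('x \<times> 'a::finite \<times> real) measure"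
    and fstar :: "'x \<times> 'a \<Rightarrow> real"
    and alpha :: real
  assumes "prob_space mu"
    and "sets mu = sets (MX \<Otimes>\<^sub>M (count_space UNIV \<Otimes>\<^sub>M borel))"
    and "integrable mu (\<lambda>\<omega>. (snd (snd \<omega>))\<^sup>2)"
    and "\<forall>a. grp_weight mu a > 0"
    and "is_bayes_regressor MX mu fstar"
    and "alpha \<ge> 0"
  shows "(INF K \<in> {K \<in> MX \<Otimes>\<^sub>M count_space UNIV \<rightarrow>\<^sub>M prob_algebra borel. sp_gap mu K \<le> alpha}.
            excess_risk mu fstar K)
       = (INF (q, Q) \<in> {(q, Q). q \<in> prob_measures_R \<and>
                               (\<forall>a. Q a \<in> prob_measures_R \<and> D_KS (Q a) q \<le> alpha / 2)}.
            (\<Sum>a\<in>UNIV. ennreal (grp_weight mu a) * W2sq (cond_bayes_dist mu fstar a) (Q a)))"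
proof -
  \<comment> \<open>Since excess_risk is defined directly as E[(f - f*)^2], only the measurability
     of f* is used.\<close>
  interpret fair_regression MX mu fstar
    using assms(1,2,4,5) by (simp add: fair_regression_def is_bayes_regressor_def)
  show ?thesis
  proof (rule antisym)
    show "(INF K \<in> {K \<in> regressors. sp_gap mu K \<le> alpha}. excess_risk mu fstar K)
        \<le> (INF (q, Q) \<in> {(q, Q). q \<in> prob_measures_R \<and>
                               (\<forall>a. Q a \<in> prob_measures_R \<and> D_KS (Q a) q \<le> alpha / 2)}.
            (\<Sum>a\<in>UNIV. ennreal (grp_weight mu a) * W2sq (cond_bayes_dist mu fstar a) (Q a)))"
      by (rule INF_greatest) (auto intro: INF_excess_risk_le_weighted_W2sq)
  next
    show "(INF (q, Q) \<in> {(q, Q). q \<in> prob_measures_R \<and>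
                               (\<forall>a. Q a \<in> prob_measures_R \<and> D_KS (Q a) q \<le> alpha / 2)}.
            (\<Sum>a\<in>UNIV. ennreal (grp_weight mu a) * W2sq (cond_bayes_dist mu fstar a) (Q a)))
        \<le> (INF K \<in> {K \<in> regressors. sp_gap mu K \<le> alpha}. excess_risk mu fstar K)"
      by (intro INF_greatest INF_weighted_W2sq_le_excess_risk) auto
  qed
qed

end
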